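(* Let $n\ge2$ and let $w$ be a nonnegative lower semi-continuous function that is $n$-superharmonic in $B(0,2)\subset\mathbb{R}^n$ with $-\Delta_nw=\mu$ for a nonnegative Radon measure $\mu$, and let $\gamma^-=\liminf_{x\to0}\frac{w(x)}{\log\frac1{|x|}}$. Then for any fixed $\alpha\in(0,1)$, \[ \lim_{y\to0}\frac{\inf_{B(y,\alpha|y|)}w}{\log\frac1{|y|}}=\gamma^-. \]
   Context: $\Delta_n u=\mathrm{div}(|\nabla u|^{n-2}\nabla u)$. A lower semi-continuous $u:\Omega\to(-\infty,+\infty]$ is $n$-superharmonic in $\Omega$ if it is not identically $+\infty$ on any component and for every bounded open $D$ with $\bar D\subset\Omega$ and every $h\in C(\bar D)$ that is $n$-harmonic in $D$, $h\le u$ on $\partial D$ implies $h\le u$ in $D$; $-\Delta_nu=\mu$ means $\int|\nabla u|^{n-2}\nabla u\cdot\nabla\varphi=\int\varphi\,d\mu$ for $\varphi\in C_c^\infty(\Omega)$. *)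

theory Defs
  imports "HOL-Analysis.Analysis" "HOL-Probability.Probability"
begin

fun Ck :: "nat \<Rightarrow> ('a::euclidean_space \<Rightarrow> real) \<Rightarrow> bool" where
  "Ck 0 f = continuous_on UNIV f"
| "Ck (Suc k) f = (continuous_on UNIV f \<and> f differentiable_on UNIV \<and>
      (\<forall>i\<in>Basis. Ck k (\<lambda>x. frechet_derivative f (at x) i)))"

definition smooth :: "('a::euclidean_space \<Rightarrow> real) \<Rightarrow> bool" where
  "smooth f \<longleftrightarrow> (\<forall>k. Ck k f)"

definition test_fun :: "'a::euclidean_space set \<Rightarrow> ('a \<Rightarrow> real) \<Rightarrow> bool" where
  "test_fun D \<phi> \<longleftrightarrow> smooth \<phi> \<and> compact (closure {x. \<phi> x \<noteq> 0})
      \<and> closure {x. \<phi> x \<noteq> 0} \<subseteq> D"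

definition loc_integrable :: "'a::euclidean_space set \<Rightarrow> ('a \<Rightarrow> 'b::euclidean_space) \<Rightarrow> bool" where
  "loc_integrable D f \<longleftrightarrow> (\<forall>K. compact K \<and> K \<subseteq> D \<longrightarrow> f absolutely_integrable_on K)"

definition weak_gradient :: "'a::euclidean_space set \<Rightarrow> ('a \<Rightarrow> real) \<Rightarrow> ('a \<Rightarrow> 'a) \<Rightarrow> bool" where
  "weak_gradient D u g \<longleftrightarrow> loc_integrable D u \<and> loc_integrable D g \<and>
     (\<forall>\<phi>. test_fun D \<phi> \<longrightarrow> (\<forall>i\<in>Basis.
        integral D (\<lambda>x. u x * frechet_derivative \<phi> (at x) i)
          = - integral D (\<lambda>x. (g x \<bullet> i) * \<phi> x)))"

text \<open>n-harmonic in D (n = DIM('a)): weak solution in W^{1,n}_loc(D) of div(|grad h|^(n-2) grad h) = 0\<close>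
definition n_harmonic :: "'a::euclidean_space set \<Rightarrow> ('a \<Rightarrow> real) \<Rightarrow> bool" where
  "n_harmonic D h \<longleftrightarrow> continuous_on D h \<and> (\<exists>g. weak_gradient D h g \<and>
     loc_integrable D (\<lambda>x. \<bar>h x\<bar> ^ DIM('a)) \<and>
     loc_integrable D (\<lambda>x. norm (g x) ^ DIM('a)) \<and>
     (\<forall>\<phi>. test_fun D \<phi> \<longrightarrow>
        integral D (\<lambda>x. norm (g x) ^ (DIM('a) - 2) * frechet_derivative \<phi> (at x) (g x)) = 0))"

definition lsc_on :: "'a::topological_space set \<Rightarrow> ('a \<Rightarrow> ereal) \<Rightarrow> bool" where
  "lsc_on \<Omega> u \<longleftrightarrow> (\<forall>x\<in>\<Omega>. u x \<le> Liminf (at x within \<Omega>) u)"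

definition n_superharmonic :: "'a::euclidean_space set \<Rightarrow> ('a \<Rightarrow> ereal) \<Rightarrow> bool" where
  "n_superharmonic \<Omega> u \<longleftrightarrow>
     (\<forall>x\<in>\<Omega>. u x \<noteq> - \<infinity>) \<and> lsc_on \<Omega> u \<and>
     (\<forall>x\<in>\<Omega>. \<exists>y\<in>connected_component_set \<Omega> x. u y \<noteq> \<infinity>) \<and>
     (\<forall>D h. open D \<and> bounded D \<and> closure D \<subseteq> \<Omega> \<and>
        continuous_on (closure D) h \<and> n_harmonic D h \<and>
        (\<forall>x\<in>frontier D. ereal (h x) \<le> u x) \<longrightarrow> (\<forall>x\<in>D. ereal (h x) \<le> u x))"

definition radon_on :: "'a::euclidean_space set \<Rightarrow> 'a measure \<Rightarrow> bool" where
  "radon_on \<Omega> \<mu> \<longleftrightarrow> sets \<mu> = sets borel \<and>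
     (\<forall>K. compact K \<and> K \<subseteq> \<Omega> \<longrightarrow> emeasure \<mu> K < \<infinity>)"

definition neg_n_laplacian_eq :: "'a::euclidean_space set \<Rightarrow> ('a \<Rightarrow> ereal) \<Rightarrow> 'a measure \<Rightarrow> bool" where
  "neg_n_laplacian_eq \<Omega> u \<mu> \<longleftrightarrow> (\<exists>g. weak_gradient \<Omega> (\<lambda>x. real_of_ereal (u x)) g \<and>
     loc_integrable \<Omega> (\<lambda>x. norm (g x) ^ (DIM('a) - 1)) \<and>
     (\<forall>\<phi>. test_fun \<Omega> \<phi> \<longrightarrow>
        integral \<Omega> (\<lambda>x. norm (g x) ^ (DIM('a) - 2) * frechet_derivative \<phi> (at x) (g x))
          = integral\<^sup>L \<mu> \<phi>))"

end

theory Submission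
  imports Defs "HOL-Real_Asymp.Real_Asymp"
begin

(* Write t(x) = log(1/|x|) and I(y) = inf of w over B(y, alpha |y|).
   Lower bound: on B(y, alpha |y|) the function t differs from t(y) by at most
   log(1/(1 - alpha)), so w > a t on a punctured neighbourhood of 0 gives
   I(y) >= a t(y) - |a| log(1/(1 - alpha)), hence liminf I/t >= a.
   Upper bound: log|x - y| is n-harmonic off y. If I(y) >= L, comparing w on the annulus
   alpha |y|/2 < |x - y| < 1 with the n-harmonic function equal to L on the inner and 0 on
   the outer sphere gives w(x0) >= L log(1/(|x0| + |y|)) / log(2/(alpha |y|)). Letting y -> 0
   along points where I/t exceeds s yields s t(x0) <= w(x0), so limsup I/t <= w(x0)/t(x0)
   for every small x0, i.e. limsup I/t <= liminf w/t. *)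

section \<open>Integration by parts against test functions\<close>

lemma absolutely_integrable_continuous_compact:
  fixes f :: "'a::euclidean_space \<Rightarrow> 'b::euclidean_space"
  assumes "compact K" "continuous_on K f"
  shows "f absolutely_integrable_on K"
  using borel_integrable_compact[OF assms] unfolding set_integrable_def
  using borel_measurable_integrable integrable_completion by blast

lemma loc_integrable_continuous:
  fixes f :: "'a::euclidean_space \<Rightarrow> 'b::euclidean_space"
  assumes "continuous_on D f"
  shows "loc_integrable D f"
  unfolding loc_integrable_def
  by (blast intro: absolutely_integrable_continuous_compact continuous_on_subset[OF assms])

lemma integrable_on_compact_support:
  fixes f :: "'a::euclidean_space \<Rightarrow> 'b::euclidean_space"
  assumes "compact K" "K \<subseteq> D" "continuous_on K f" "\<And>x. x \<notin> K \<Longrightarrow> f x = 0"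
  shows "f integrable_on D"
  using absolutely_integrable_continuous_compact[OF assms(1,3)] assms(2,4)
  by (blast intro: integrable_on_superset set_lebesgue_integral_eq_integral(1))

lemma has_real_derivative_along_line:
  assumes "(f has_derivative f') (at (x + s *\<^sub>R v))"
  shows "((\<lambda>s. f (x + s *\<^sub>R v)) has_real_derivative f' v) (at s)"
proof -
  have "((\<lambda>s. x + s *\<^sub>R v) has_derivative (\<lambda>t. t *\<^sub>R v)) (at s)"
    by (auto intro!: derivative_eq_intros)
  from has_derivative_compose[OF this assms]
  have "((\<lambda>s. f (x + s *\<^sub>R v)) has_derivative (\<lambda>t. f' (t *\<^sub>R v))) (at s)" by (simp add: o_def)
  moreover have "(\<lambda>t. f' (t *\<^sub>R v)) = (\<lambda>t. f' v * t)"
    using linear_scale[OF has_derivative_linear[OF assms]] by (simp add: mult.commute)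
  ultimately show ?thesis by (simp add: has_field_derivative_def)
qed

lemma has_integral_shift_compact_support:
  fixes f :: "'a::euclidean_space \<Rightarrow> 'b::euclidean_space"
  assumes "continuous_on UNIV f" "compact K" "\<And>x. x \<notin> K \<Longrightarrow> f x = 0"
  shows "((\<lambda>x. f (x + c)) has_integral integral UNIV f) UNIV"
proof -
  obtain a where a: "K \<subseteq> cbox (-a) a"
    using bounded_subset_cbox_symmetric compact_imp_bounded[OF assms(2)] by metis
  define J where "J = integral (cbox (-a) a) f"
  have out: "f x = 0" if "x \<notin> cbox (-a) a" for x using a that assms(3) by blast
  have box: "(f has_integral J) (cbox (-a) a)"
    unfolding J_def using integrable_continuous[OF continuous_on_subset[OF assms(1)]] by blast
  then have "(f has_integral J) UNIV"
    using out by (blast intro: has_integral_on_superset)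
  then have J: "integral UNIV f = J" by (rule integral_unique)
  have "((\<lambda>x. f (c + x)) has_integral J) (cbox (-a - c) (a - c))"
    using has_integral_shift_cbox_iff[of f c J "-a - c" "a - c"] box by (simp add: o_def)
  moreover have "f (c + x) = 0" if "x \<notin> cbox (-a - c) (a - c)" for x
  proof (rule out)
    show "c + x \<notin> cbox (-a) a"
      using that by (rule contrapos_nn) (auto simp: mem_box inner_diff_left inner_add_left)
  qed
  ultimately have "((\<lambda>x. f (c + x)) has_integral J) UNIV"
    by (rule has_integral_on_superset) auto
  then show ?thesis unfolding J by (simp add: add.commute)
qed

lemma tendsto_difference_quotient_along_line:
  assumes "(f has_derivative f') (at x)" and s: "filterlim s (at 0) F"
  shows "((\<lambda>k. (f (x + s k *\<^sub>R v) - f x) / s k) \<longlongrightarrow> f' v) F"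
proof -
  have "((\<lambda>t. (f (x + t *\<^sub>R v) - f x) / t) \<longlongrightarrow> f' v) (at 0)"
    using has_real_derivative_along_line[of f f' x 0 v] assms(1) unfolding DERIV_def by simp
  from filterlim_compose[OF this s] show ?thesis .
qed

lemma abs_difference_quotient_le:
  fixes f :: "'a::real_normed_vector \<Rightarrow> real"
  assumes "\<And>y. (f has_derivative f' y) (at y)" "\<And>y. \<bar>f' y v\<bar> \<le> B" "0 < s"
  shows "\<bar>(f (x + s *\<^sub>R v) - f x) / s\<bar> \<le> B"
proof -
  obtain z where "f (x + s *\<^sub>R v) - f (x + 0 *\<^sub>R v) = (s - 0) * f' (x + z *\<^sub>R v) v"
    using MVT2[OF assms(3) has_real_derivative_along_line[OF assms(1)]] by blast
  then show ?thesis
    using assms(2,3) by simp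
qed

lemma has_integral_directional_derivative_compact_support:
  fixes \<psi> :: "'a::euclidean_space \<Rightarrow> real"
  assumes der: "\<And>x. (\<psi> has_derivative \<psi>' x) (at x)"
    and K: "compact K" and supp: "\<And>x. x \<notin> K \<Longrightarrow> \<psi> x = 0"
    and bound: "\<And>x. \<bar>\<psi>' x v\<bar> \<le> B"
  shows "((\<lambda>x. \<psi>' x v) has_integral 0) UNIV"
proof -
  (* The difference quotients q k integrate to 0 by translation invariance, converge to
     \<psi>' x v and are dominated by B on a box containing every support. *)
  have cont: "continuous_on UNIV \<psi>"
    using der by (meson continuous_at_imp_continuous_on has_derivative_continuous)
  obtain R where R: "\<And>x. R < norm x \<Longrightarrow> \<psi> x = 0"
    using compact_imp_bounded[OF K] supp unfolding bounded_iff by (meson not_le)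
  obtain a where a: "cball (0::'a) (R + norm v) \<subseteq> cbox (-a) a"
    using bounded_subset_cbox_symmetric[OF bounded_cball] by blast
  define s :: "nat \<Rightarrow> real" where "s k = 1 / Suc k" for k
  define q where "q k x = (\<psi> (x + s k *\<^sub>R v) - \<psi> x) / s k" for k x
  define h where "h x = (if x \<in> cbox (-a) a then B else 0)" for x
  have s: "0 < s k" "s k \<le> 1" for k
    unfolding s_def by auto
  have q_int: "(q k has_integral 0) UNIV" for k
  proof -
    note shift = has_integral_shift_compact_support[OF cont K supp]
    from has_integral_divide[OF has_integral_diff[OF shift[of "s k *\<^sub>R v"] shift[of 0]], of "s k"]
    show ?thesis unfolding q_def by simp
  qed
  have q_bound: "norm (q k x) \<le> h x" for k x
  proof (cases "x \<in> cbox (-a) a")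
    case True
    then show ?thesis
      using abs_difference_quotient_le[OF der bound s(1)] by (simp add: q_def h_def)
  next
    case False
    then have "R + norm v < norm x" using a by (metis mem_cball_0 not_le subsetD)
    moreover have "norm (s k *\<^sub>R v) \<le> norm v"
      using s[of k] by (simp add: mult_left_le_one_le)
    moreover have "norm x - norm (s k *\<^sub>R v) \<le> norm (x + s k *\<^sub>R v)"
      using norm_triangle_ineq2[of x "- s k *\<^sub>R v"] by simp
    ultimately have "R < norm (x + s k *\<^sub>R v)" "R < norm x"
      using norm_ge_zero[of v] by linarith+
    then show ?thesis using False R by (simp add: q_def h_def)
  qed
  have "filterlim s (at 0) sequentially"
    unfolding s_def[abs_def] by real_asymp
  then have q_lim: "(\<lambda>k. q k x) \<longlonglongrightarrow> \<psi>' x v" for x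
    unfolding q_def by (rule tendsto_difference_quotient_along_line[OF der])
  have h_int: "h integrable_on UNIV"
    unfolding h_def[abs_def] integrable_restrict_UNIV by (rule integrable_const)
  note conv = dominated_convergence[OF has_integral_integrable[OF q_int] h_int q_bound q_lim]
  have "integral UNIV (\<lambda>x. \<psi>' x v) = 0"
    using conv(2) by (simp add: integral_unique[OF q_int] LIMSEQ_const_iff)
  then show ?thesis
    using conv(1) by (simp add: has_integral_integral)
qed

lemma test_fun_C1:
  assumes "test_fun D \<phi>"
  shows "continuous_on UNIV \<phi>" "\<phi> differentiable_on UNIV"
    "\<And>i. i \<in> Basis \<Longrightarrow> continuous_on UNIV (\<lambda>x. frechet_derivative \<phi> (at x) i)"
proof -
  have "Ck (Suc 0) \<phi>"
    using assms unfolding test_fun_def smooth_def by blast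
  then show "continuous_on UNIV \<phi>" "\<phi> differentiable_on UNIV"
    "\<And>i. i \<in> Basis \<Longrightarrow> continuous_on UNIV (\<lambda>x. frechet_derivative \<phi> (at x) i)"
    unfolding Ck.simps by blast+
qed

lemma test_fun_has_derivative:
  assumes "test_fun D \<phi>"
  shows "(\<phi> has_derivative frechet_derivative \<phi> (at x)) (at x)"
  using test_fun_C1(2)[OF assms] frechet_derivative_works
  unfolding differentiable_on_def by blast

lemma frechet_derivative_outside_closure_support:
  fixes f :: "'a::real_normed_vector \<Rightarrow> 'b::real_normed_vector"
  assumes "x \<notin> closure {x. f x \<noteq> 0}"
  shows "frechet_derivative f (at x) = (\<lambda>_. 0)"
proof -
  have "(f has_derivative (\<lambda>_. 0)) (at x)"
  proof (rule has_derivative_transform_within_open[where s = "- closure {x. f x \<noteq> 0}"])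
    show "((\<lambda>_. 0) has_derivative (\<lambda>_. 0)) (at x)"
      by simp
    show "0 = f z" if "z \<in> - closure {x. f x \<noteq> 0}" for z
      using that closure_subset[of "{x. f x \<noteq> 0}"] by auto
  qed (use assms in auto)
  then show ?thesis
    by (rule frechet_derivative_at[symmetric])
qed

lemma has_derivative_zero_extension_mult_test_fun:
  fixes \<phi> h :: "'a::euclidean_space \<Rightarrow> real"
  assumes D: "open D" and \<phi>: "test_fun D \<phi>"
    and h: "\<And>x. x \<in> D \<Longrightarrow> (h has_derivative h' x) (at x)"
  shows "((\<lambda>x. if x \<in> D then h x * \<phi> x else 0) has_derivative
    (\<lambda>u. if x \<in> D then h x * frechet_derivative \<phi> (at x) u + h' x u * \<phi> x else 0)) (at x)"
proof (cases "x \<in> D")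
  case True
  have "((\<lambda>x. h x * \<phi> x) has_derivative
      (\<lambda>u. h x * frechet_derivative \<phi> (at x) u + h' x u * \<phi> x)) (at x)"
    using has_derivative_mult[OF h[OF True] test_fun_has_derivative[OF \<phi>]] by simp
  then show ?thesis
    using True D by (auto intro: has_derivative_transform_within_open)
next
  case False
  define S where "S = closure {x. \<phi> x \<noteq> 0}"
  have "open (- S)" "x \<in> - S"
    using \<phi> False unfolding S_def test_fun_def by auto
  moreover have "\<phi> z = 0" if "z \<in> - S" for z
    using that closure_subset[of "{x. \<phi> x \<noteq> 0}"] unfolding S_def by auto
  ultimately show ?thesis
    using False by (auto intro: has_derivative_transform_within_open[where f = "\<lambda>_. 0"])
qed

lemma has_integral_test_fun_by_parts:
  fixes \<phi> h :: "'a::euclidean_space \<Rightarrow> real"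
  assumes D: "open D" and \<phi>: "test_fun D \<phi>" and v: "v \<in> Basis"
    and h: "\<And>x. x \<in> D \<Longrightarrow> (h has_derivative h' x) (at x)"
    and h_cont: "continuous_on D h" "continuous_on D (\<lambda>x. h' x v)"
  shows "((\<lambda>x. h x * frechet_derivative \<phi> (at x) v + h' x v * \<phi> x) has_integral 0) D"
proof -
  define S where "S = closure {x. \<phi> x \<noteq> 0}"
  define F where "F x = h x * frechet_derivative \<phi> (at x) v + h' x v * \<phi> x" for x
  have S: "compact S" "S \<subseteq> D"
    using \<phi> unfolding S_def test_fun_def by auto
  have outside_S: "\<phi> x = 0" "F x = 0" if "x \<notin> S" for x
    using that closure_subset[of "{x. \<phi> x \<noteq> 0}"] frechet_derivative_outside_closure_support[of x \<phi>]
    unfolding S_def F_def by auto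
  have "continuous_on S F"
    unfolding F_def using S(2) test_fun_C1(1)[OF \<phi>] test_fun_C1(3)[OF \<phi> v]
    by (intro continuous_intros continuous_on_subset[OF h_cont(1)] continuous_on_subset[OF h_cont(2)])
       (auto intro: continuous_on_subset)
  then obtain B where B: "\<And>x. x \<in> S \<Longrightarrow> norm (F x) \<le> B" "0 \<le> B"
    using continuous_on_compact_bound[OF S(1)] by metis
  have "((\<lambda>x. if x \<in> D then F x else 0) has_integral 0) UNIV"
    unfolding F_def
  proof (rule has_integral_directional_derivative_compact_support[OF
        has_derivative_zero_extension_mult_test_fun[OF D \<phi> h] S(1)])
    show "(if x \<in> D then h x * \<phi> x else 0) = 0" if "x \<notin> S" for x
      using outside_S that by simp
    show "\<bar>if x \<in> D then h x * frechet_derivative \<phi> (at x) v + h' x v * \<phi> x else 0\<bar> \<le> B" for x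
      using B outside_S[of x] by (cases "x \<in> S") (auto simp: F_def)
  qed
  then show ?thesis
    using has_integral_restrict_UNIV[of D F 0] by (simp add: F_def)
qed

lemma weak_gradient_C1:
  fixes h :: "'a::euclidean_space \<Rightarrow> real"
  assumes D: "open D" and h: "\<And>x. x \<in> D \<Longrightarrow> (h has_derivative (\<lambda>u. g x \<bullet> u)) (at x)"
    and h_cont: "continuous_on D h" and g_cont: "continuous_on D g"
  shows "weak_gradient D h g"
  unfolding weak_gradient_def
proof (intro conjI allI impI ballI)
  show "loc_integrable D h" "loc_integrable D g"
    using h_cont g_cont by (simp_all add: loc_integrable_continuous)
  fix \<phi> :: "'a \<Rightarrow> real" and i :: 'a
  assume \<phi>: "test_fun D \<phi>" and i: "i \<in> Basis"
  have "continuous_on D (\<lambda>x. g x \<bullet> i)"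
    using g_cont by (intro continuous_intros)
  then have parts: "((\<lambda>x. h x * frechet_derivative \<phi> (at x) i + g x \<bullet> i * \<phi> x) has_integral 0) D"
    using has_integral_test_fun_by_parts[OF D \<phi> i h h_cont] by simp
  have "(\<lambda>x. g x \<bullet> i * \<phi> x) integrable_on D"
  proof (rule integrable_on_compact_support)
    show "compact (closure {x. \<phi> x \<noteq> 0})" "closure {x. \<phi> x \<noteq> 0} \<subseteq> D"
      using \<phi> unfolding test_fun_def by auto
    then show "continuous_on (closure {x. \<phi> x \<noteq> 0}) (\<lambda>x. g x \<bullet> i * \<phi> x)"
      using test_fun_C1(1)[OF \<phi>] \<open>continuous_on D (\<lambda>x. g x \<bullet> i)\<close>
      by (auto intro!: continuous_on_mult intro: continuous_on_subset)
    show "g x \<bullet> i * \<phi> x = 0" if "x \<notin> closure {x. \<phi> x \<noteq> 0}" for x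
      using that closure_subset[of "{x. \<phi> x \<noteq> 0}"] by auto
  qed
  then obtain I where I: "((\<lambda>x. g x \<bullet> i * \<phi> x) has_integral I) D"
    by blast
  from has_integral_diff[OF parts I]
  have "((\<lambda>x. h x * frechet_derivative \<phi> (at x) i) has_integral - I) D"
    by simp
  with I show "integral D (\<lambda>x. h x * frechet_derivative \<phi> (at x) i) = - integral D (\<lambda>x. g x \<bullet> i * \<phi> x)"
    by (simp add: integral_unique)
qed

lemma linear_functional_expansion:
  fixes f :: "'a::euclidean_space \<Rightarrow> real"
  assumes "linear f"
  shows "f u = (\<Sum>i\<in>Basis. (u \<bullet> i) * f i)"
  using Linear_Algebra.linear_componentwise[OF assms, of u 1] by simp

lemma integral_test_fun_derivative_divergence_free:
  fixes V :: "'a::euclidean_space \<Rightarrow> 'a"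
  assumes D: "open D" and \<phi>: "test_fun D \<phi>"
    and V: "\<And>i x. i \<in> Basis \<Longrightarrow> x \<in> D \<Longrightarrow> ((\<lambda>x. V x \<bullet> i) has_derivative V' i x) (at x)"
    and V_cont: "continuous_on D V" "\<And>i. i \<in> Basis \<Longrightarrow> continuous_on D (\<lambda>x. V' i x i)"
    and div: "\<And>x. x \<in> D \<Longrightarrow> (\<Sum>i\<in>Basis. V' i x i) = 0"
  shows "integral D (\<lambda>x. frechet_derivative \<phi> (at x) (V x)) = 0"
proof -
  have "((\<lambda>x. V x \<bullet> i * frechet_derivative \<phi> (at x) i + V' i x i * \<phi> x) has_integral 0) D"
    if i: "i \<in> Basis" for i
    using V_cont(1)
    by (intro has_integral_test_fun_by_parts[OF D \<phi> i V[OF i] _ V_cont(2)[OF i]] continuous_intros)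
  then have "((\<lambda>x. \<Sum>i\<in>Basis. V x \<bullet> i * frechet_derivative \<phi> (at x) i + V' i x i * \<phi> x)
      has_integral (\<Sum>i\<in>(Basis::'a set). 0)) D"
    by (rule has_integral_sum[OF finite_Basis])
  then have "((\<lambda>x. \<Sum>i\<in>Basis. V x \<bullet> i * frechet_derivative \<phi> (at x) i + V' i x i * \<phi> x)
      has_integral 0) D"
    by simp
  moreover have "(\<Sum>i\<in>Basis. V x \<bullet> i * frechet_derivative \<phi> (at x) i + V' i x i * \<phi> x)
      = frechet_derivative \<phi> (at x) (V x)" if "x \<in> D" for x
  proof -
    have "linear (frechet_derivative \<phi> (at x))"
      using has_derivative_linear[OF test_fun_has_derivative[OF \<phi>]] .
    then show ?thesis
      using div[OF that] linear_functional_expansion[of _ "V x"]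
      by (simp add: sum.distrib flip: sum_distrib_right)
  qed
  ultimately show ?thesis
    by (metis (no_types, lifting) has_integral_cong integral_unique)
qed

section \<open>The n-harmonic function log |x - y|\<close>

lemma has_derivative_norm_diff:
  fixes y :: "'a::real_inner"
  assumes "x \<noteq> y"
  shows "((\<lambda>x. norm (x - y)) has_derivative (\<lambda>u. ((x - y) \<bullet> u) / norm (x - y))) (at x)"
proof -
  have "((\<lambda>x. norm (x - y)) has_derivative (\<lambda>u. u \<bullet> sgn (x - y))) (at x)"
    using has_derivative_compose[OF has_derivative_diff[OF has_derivative_ident has_derivative_const]
        has_derivative_norm[of "x - y"]] assms
    by simp
  then show ?thesis
    by (simp add: sgn_div_norm inner_commute divide_inverse mult.commute)
qed

lemma has_derivative_ln_norm_diff: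
  fixes y :: "'a::real_inner"
  assumes "x \<noteq> y"
  shows "((\<lambda>x. A * ln (norm (x - y)) + B) has_derivative
      (\<lambda>u. ((A / norm (x - y)^2) *\<^sub>R (x - y)) \<bullet> u)) (at x)"
  using assms
  by (auto intro!: derivative_eq_intros has_derivative_norm_diff ext
      simp: inner_diff_left power2_eq_square field_simps)

lemma has_derivative_radial_field_component:
  fixes y :: "'a::real_inner"
  assumes "x \<noteq> y"
  shows "((\<lambda>x. ((x - y) \<bullet> i) / norm (x - y) ^ n) has_derivative
     (\<lambda>u. (u \<bullet> i) / norm (x - y) ^ n
        - real n * ((x - y) \<bullet> i) * ((x - y) \<bullet> u) / norm (x - y) ^ (n + 2))) (at x)"
  apply (rule has_derivative_eq_rhs)
   apply (auto intro!: derivative_eq_intros has_derivative_norm_diff simp: assms)[1]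
  using assms by (cases n) (auto intro!: ext simp: field_simps)

lemma radial_field_divergence_zero:
  fixes z :: "'a::euclidean_space"
  assumes "z \<noteq> 0"
  shows "(\<Sum>i\<in>Basis. (i \<bullet> i) / norm z ^ DIM('a)
      - real DIM('a) * (z \<bullet> i) * (z \<bullet> i) / norm z ^ (DIM('a) + 2)) = 0"
proof -
  have "(\<Sum>i\<in>Basis. (z \<bullet> i) * (z \<bullet> i)) = norm z ^ 2"
    using euclidean_inner[of z z] by (simp add: power2_norm_eq_inner)
  then show ?thesis
    using assms
    by (simp add: sum_subtractf inner_Basis mult.assoc flip: sum_distrib_left sum_divide_distrib)
       (simp add: power_add power2_eq_square)
qed

lemma norm_power_scaleR_log_gradient:
  fixes z :: "'a::real_normed_vector"
  assumes z: "z \<noteq> 0" and n: "2 \<le> n"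
  shows "norm ((A / norm z ^ 2) *\<^sub>R z) ^ (n - 2) *\<^sub>R ((A / norm z ^ 2) *\<^sub>R z)
    = (\<bar>A\<bar> ^ (n - 2) * A) *\<^sub>R ((1 / norm z ^ n) *\<^sub>R z)"
proof -
  obtain m where m: "n = m + 2"
    using n by (metis add.commute le_Suc_ex)
  have "norm ((A / norm z ^ 2) *\<^sub>R z) = \<bar>A\<bar> / norm z"
    using z by (simp add: power2_eq_square)
  then show ?thesis
    using z by (simp add: m power_divide power_add power2_eq_square)
qed

lemma integral_test_fun_derivative_radial_field:
  fixes y :: "'a::euclidean_space"
  assumes D: "open D" and y: "y \<notin> D" and \<phi>: "test_fun D \<phi>"
  shows "integral D (\<lambda>x. frechet_derivative \<phi> (at x) ((1 / norm (x - y) ^ DIM('a)) *\<^sub>R (x - y))) = 0"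
proof (rule integral_test_fun_derivative_divergence_free[OF D \<phi>])
  define n where "n = DIM('a)"
  define V' where "V' i x u = (u \<bullet> i) / norm (x - y) ^ n
      - real n * ((x - y) \<bullet> i) * ((x - y) \<bullet> u) / norm (x - y) ^ (n + 2)" for i x u
  have xy: "x \<noteq> y" if "x \<in> D" for x
    using that y by auto
  show "((\<lambda>x. ((1 / norm (x - y) ^ DIM('a)) *\<^sub>R (x - y)) \<bullet> i) has_derivative V' i x) (at x)"
    if "i \<in> Basis" "x \<in> D" for i x
    using has_derivative_radial_field_component[OF xy[OF that(2)], of i n]
    by (simp add: n_def V'_def[abs_def])
  show "continuous_on D (\<lambda>x. (1 / norm (x - y) ^ DIM('a)) *\<^sub>R (x - y))"
    by (intro continuous_intros) (auto dest: xy)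
  show "continuous_on D (\<lambda>x. V' i x i)" for i
    unfolding V'_def by (intro continuous_intros) (auto dest: xy)
  show "(\<Sum>i\<in>Basis. V' i x i) = 0" if "x \<in> D" for x
    using radial_field_divergence_zero[of "x - y"] xy[OF that]
    by (simp add: V'_def n_def mult.assoc)
qed

lemma n_harmonic_ln_norm_diff:
  fixes y :: "'a::euclidean_space" and A B :: real
  assumes n: "2 \<le> DIM('a)" and D: "open D" and y: "y \<notin> D"
  shows "n_harmonic D (\<lambda>x. A * ln (norm (x - y)) + B)"
proof -
  define g where "g x = (A / norm (x - y)^2) *\<^sub>R (x - y)" for x
  define c where "c = \<bar>A\<bar> ^ (DIM('a) - 2) * A"
  have xy: "x \<noteq> y" if "x \<in> D" for x
    using that y by auto
  have h_cont: "continuous_on D (\<lambda>x. A * ln (norm (x - y)) + B)"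
    by (intro continuous_intros) (auto dest: xy)
  have g_cont: "continuous_on D g"
    unfolding g_def by (intro continuous_intros) (auto dest: xy)
  have grad: "weak_gradient D (\<lambda>x. A * ln (norm (x - y)) + B) g"
    by (rule weak_gradient_C1[OF D _ h_cont g_cont])
      (use has_derivative_ln_norm_diff[OF xy] in \<open>simp add: g_def\<close>)
  have "integral D (\<lambda>x. norm (g x) ^ (DIM('a) - 2) * frechet_derivative \<phi> (at x) (g x)) = 0"
    if \<phi>: "test_fun D \<phi>" for \<phi>
  proof -
    (* |g|^(n-2) g is c times the divergence-free field (x - y) / |x - y|^n *)
    have "norm (g x) ^ (DIM('a) - 2) * frechet_derivative \<phi> (at x) (g x)
        = c * frechet_derivative \<phi> (at x) ((1 / norm (x - y) ^ DIM('a)) *\<^sub>R (x - y))"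
      if "x \<in> D" for x
    proof -
      have "linear (frechet_derivative \<phi> (at x))"
        using has_derivative_linear[OF test_fun_has_derivative[OF \<phi>]] .
      then have scale: "frechet_derivative \<phi> (at x) (r *\<^sub>R u) = r * frechet_derivative \<phi> (at x) u"
        for r u
        by (simp add: linear_scale)
      have "norm (g x) ^ (DIM('a) - 2) * frechet_derivative \<phi> (at x) (g x)
          = frechet_derivative \<phi> (at x) (norm (g x) ^ (DIM('a) - 2) *\<^sub>R g x)"
        by (rule scale[symmetric])
      also have "norm (g x) ^ (DIM('a) - 2) *\<^sub>R g x
          = c *\<^sub>R ((1 / norm (x - y) ^ DIM('a)) *\<^sub>R (x - y))"
        unfolding g_def c_def using xy[OF that] n by (intro norm_power_scaleR_log_gradient) auto
      finally show ?thesis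
        by (simp only: scale)
    qed
    then have "integral D (\<lambda>x. norm (g x) ^ (DIM('a) - 2) * frechet_derivative \<phi> (at x) (g x))
        = integral D (\<lambda>x. c * frechet_derivative \<phi> (at x) ((1 / norm (x - y) ^ DIM('a)) *\<^sub>R (x - y)))"
      by (rule integral_cong)
    then show ?thesis
      using integral_test_fun_derivative_radial_field[OF D y \<phi>] by (simp add: integral_mult_right)
  qed
  then show ?thesis
    unfolding n_harmonic_def
  proof (intro conjI exI[of _ g] allI impI h_cont grad)
    show "loc_integrable D (\<lambda>x. \<bar>A * ln (norm (x - y)) + B\<bar> ^ DIM('a))"
      "loc_integrable D (\<lambda>x. norm (g x) ^ DIM('a))"
      by (intro loc_integrable_continuous continuous_on_power continuous_on_rabs
          continuous_on_norm h_cont g_cont)+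
  qed
qed

section \<open>Comparison with logarithmic barriers\<close>

lemma closure_annulus_subset:
  fixes y :: "'a::real_normed_vector"
  shows "closure (ball y R - cball y \<rho>) \<subseteq> cball y R - ball y \<rho>"
  by (rule closure_minimal) auto

lemma frontier_annulus_subset:
  fixes y :: "'a::real_normed_vector"
  shows "frontier (ball y R - cball y \<rho>) \<subseteq> sphere y \<rho> \<union> sphere y R"
proof
  fix z assume "z \<in> frontier (ball y R - cball y \<rho>)"
  moreover have "open (ball y R - cball y \<rho>)"
    by auto
  ultimately have "z \<in> closure (ball y R - cball y \<rho>)" "z \<notin> ball y R - cball y \<rho>"
    by (auto simp: frontier_def interior_open)
  then show "z \<in> sphere y \<rho> \<union> sphere y R"
    using closure_annulus_subset[of y R \<rho>] by auto
qed

lemma n_superharmonic_ge_log_barrier: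
  fixes w :: "'a::euclidean_space \<Rightarrow> ereal"
  assumes n: "2 \<le> DIM('a)" and w: "n_superharmonic \<Omega> w"
    and \<rho>: "0 < \<rho>" "\<rho> < R" and \<Omega>: "cball y R \<subseteq> \<Omega>"
    and outer: "\<forall>z\<in>sphere y R. 0 \<le> w z" and inner: "\<forall>z\<in>sphere y \<rho>. ereal L \<le> w z"
    and x: "\<rho> < dist y x" "dist y x < R"
  shows "ereal (L * ln (R / dist y x) / ln (R / \<rho>)) \<le> w x"
proof -
  define D where "D = ball y R - cball y \<rho>"
  define l where "l = ln (R / \<rho>)"
  define h where "h z = (- L / l) * ln (norm (z - y)) + L * ln R / l" for z
  have h_eq: "h z = L * ln (R / dist y z) / l" if "z \<noteq> y" for z
  proof -
    have "ln (R / dist y z) = ln R - ln (norm (z - y))"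
      using that \<rho> by (simp add: ln_div dist_norm norm_minus_commute)
    then show ?thesis
      by (simp add: h_def diff_divide_distrib right_diff_distrib)
  qed
  have "open D" "bounded D" "y \<notin> D"
    using \<rho> unfolding D_def by auto
  moreover have closure_D: "closure D \<subseteq> cball y R - ball y \<rho>"
    unfolding D_def by (rule closure_annulus_subset)
  then have "closure D \<subseteq> \<Omega>"
    using \<Omega> by blast
  moreover have "continuous_on (closure D) h"
    unfolding h_def using closure_D \<rho>
    by (intro continuous_intros) (auto simp: dist_norm norm_minus_commute)
  moreover have "n_harmonic D h"
    unfolding h_def[abs_def] using n_harmonic_ln_norm_diff[OF n \<open>open D\<close> \<open>y \<notin> D\<close>] .
  moreover have "ereal (h z) \<le> w z" if "z \<in> frontier D" for z
  proof -
    have "z \<noteq> y" and "z \<in> sphere y \<rho> \<or> z \<in> sphere y R"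
      using that frontier_annulus_subset[of y R \<rho>] \<rho> unfolding D_def by auto
    from this(2) show ?thesis
    proof
      assume "z \<in> sphere y \<rho>"
      then show ?thesis
        using inner h_eq[OF \<open>z \<noteq> y\<close>] \<rho> by (auto simp: l_def)
    next
      assume "z \<in> sphere y R"
      then show ?thesis
        using outer h_eq[OF \<open>z \<noteq> y\<close>] \<rho> by (simp add: zero_ereal_def[symmetric])
    qed
  qed
  ultimately have "\<forall>z\<in>D. ereal (h z) \<le> w z"
    using w unfolding n_superharmonic_def by blast
  moreover have "x \<in> D" "x \<noteq> y"
    using x \<rho> by (auto simp: D_def)
  ultimately show ?thesis
    using h_eq by (auto simp: l_def)
qed

section \<open>Infima over the balls B(y, alpha |y|)\<close>

lemma ereal_le_if_real_less_imp_le: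
  fixes x y :: ereal
  assumes "\<And>a. ereal a < x \<Longrightarrow> ereal a \<le> y"
  shows "x \<le> y"
proof (rule dense_le)
  fix z assume "z < x"
  then show "z \<le> y"
    using assms by (cases z) auto
qed

lemma norm_bounds_in_ball:
  fixes x y :: "'a::real_normed_vector"
  assumes "x \<in> ball y (\<alpha> * norm y)"
  shows "(1 - \<alpha>) * norm y < norm x" "norm x < (1 + \<alpha>) * norm y"
proof -
  have "norm (y - x) < \<alpha> * norm y"
    using assms by (simp add: dist_norm)
  then show "(1 - \<alpha>) * norm y < norm x" "norm x < (1 + \<alpha>) * norm y"
    using norm_triangle_ineq2[of y x] norm_triangle_ineq3[of x y] norm_minus_commute[of x y]
    by (simp_all add: algebra_simps)
qed

lemma abs_ln_norm_diff_in_ball: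
  fixes x y :: "'a::real_normed_vector"
  assumes x: "x \<in> ball y (\<alpha> * norm y)" and \<alpha>: "\<alpha> < 1"
  shows "\<bar>ln (norm x) - ln (norm y)\<bar> \<le> ln (1 / (1 - \<alpha>))"
proof -
  have "0 < \<alpha> * norm y"
    using x by (auto dest: le_less_trans[OF zero_le_dist])
  then have y: "0 < norm y" and "0 < \<alpha>"
    by (auto simp: zero_less_mult_iff)
  note bounds = norm_bounds_in_ball[OF x]
  have lower_pos: "0 < (1 - \<alpha>) * norm y"
    using \<alpha> y by simp
  then have x_pos: "0 < norm x"
    using bounds(1) by linarith
  have "ln (norm x) < ln ((1 + \<alpha>) * norm y)"
    using bounds(2) x_pos y \<open>0 < \<alpha>\<close> by simp
  also have "\<dots> = ln (1 + \<alpha>) + ln (norm y)"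
    using \<open>0 < \<alpha>\<close> y by (simp add: ln_mult)
  also have "ln (1 + \<alpha>) \<le> ln (1 / (1 - \<alpha>))"
    using \<open>0 < \<alpha>\<close> \<alpha> by (simp add: field_simps)
  finally have upper: "ln (norm x) - ln (norm y) < ln (1 / (1 - \<alpha>))"
    by simp
  have "ln ((1 - \<alpha>) * norm y) < ln (norm x)"
    using bounds(1) lower_pos x_pos by simp
  then have "ln (norm y) - ln (norm x) < ln (1 / (1 - \<alpha>))"
    using \<alpha> y by (simp add: ln_mult ln_div)
  with upper show ?thesis
    by linarith
qed

lemma filterlim_norm_at_right_0: "filterlim norm (at_right 0) (at (0::'a::real_normed_vector))"
proof (rule tendsto_imp_filterlim_at_right)
  show "(norm \<longlongrightarrow> 0) (at (0::'a))"
    using tendsto_norm_zero[OF tendsto_ident_at[of 0 UNIV]] by simp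
  show "\<forall>\<^sub>F x in at (0::'a). 0 < norm x"
    by (simp add: eventually_at_filter)
qed

lemma filterlim_ln_inverse_norm_at_0:
  "filterlim (\<lambda>y. ln (1 / norm y)) at_top (at (0::'a::real_normed_vector))"
proof -
  have "filterlim (\<lambda>r::real. ln (1 / r)) at_top (at_right 0)"
    by real_asymp
  then show ?thesis
    using filterlim_compose filterlim_norm_at_right_0 by blast
qed

lemma tendsto_ereal_minus_div_ln_inverse_norm:
  "((\<lambda>y. ereal (a - c / ln (1 / norm y))) \<longlongrightarrow> ereal a) (at (0::'a::real_normed_vector))"
proof -
  have "((\<lambda>y. c / ln (1 / norm y)) \<longlongrightarrow> 0) (at (0::'a))"
    using filterlim_ln_inverse_norm_at_0
    by (intro tendsto_divide_0[OF tendsto_const] filterlim_at_top_imp_at_infinity)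
  then have "((\<lambda>y. a - c / ln (1 / norm y)) \<longlongrightarrow> a - 0) (at (0::'a))"
    by (intro tendsto_diff tendsto_const)
  then show ?thesis
    by simp
qed

lemma frequently_less_if_less_Limsup:
  fixes f :: "_ \<Rightarrow> 'a::complete_linorder"
  assumes "c < Limsup F f"
  shows "\<exists>\<^sub>F x in F. c < f x"
proof (rule ccontr)
  assume "\<not> (\<exists>\<^sub>F x in F. c < f x)"
  then have "\<forall>\<^sub>F x in F. f x \<le> c"
    by (simp add: not_frequently not_less)
  then have "Limsup F f \<le> c"
    by (rule Limsup_bounded)
  with assms show False
    by simp
qed

lemma tendsto_le_if_frequently_le:
  fixes f :: "_ \<Rightarrow> 'a::linorder_topology"
  assumes "(f \<longlongrightarrow> l) F" "\<exists>\<^sub>F x in F. f x \<le> c"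
  shows "l \<le> c"
proof (rule ccontr)
  assume "\<not> l \<le> c"
  then have "\<forall>\<^sub>F x in F. c < f x"
    using order_tendstoD(1)[OF assms(1)] by (simp add: not_le)
  with assms(2) show False
    by (simp add: frequently_def not_le eventually_mono)
qed

lemma eventually_at_0_norm_lessI:
  fixes P :: "'a::real_normed_vector \<Rightarrow> bool"
  assumes "0 < d" "\<And>y. 0 < norm y \<Longrightarrow> norm y < d \<Longrightarrow> P y"
  shows "eventually P (at 0)"
  using assms unfolding eventually_at by (auto simp: dist_norm)

lemma inf_ball_ge_log_lower_bound:
  fixes w :: "'a::real_normed_vector \<Rightarrow> ereal"
  assumes \<alpha>: "\<alpha> < 1" and y: "0 < norm y"
    and lower: "\<And>x. 0 < norm x \<Longrightarrow> norm x < 2 * norm y \<Longrightarrow> ereal (a * ln (1 / norm x)) \<le> w x"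
  shows "ereal (a * ln (1 / norm y) - \<bar>a\<bar> * ln (1 / (1 - \<alpha>))) \<le> (INF x\<in>ball y (\<alpha> * norm y). w x)"
proof (rule INF_greatest)
  fix x assume x: "x \<in> ball y (\<alpha> * norm y)"
  have "0 < (1 - \<alpha>) * norm y" "(1 + \<alpha>) * norm y \<le> 2 * norm y"
    using \<alpha> y by simp_all
  then have x_pos: "0 < norm x" and "norm x < 2 * norm y"
    using norm_bounds_in_ball[OF x] by linarith+
  then have "ereal (a * ln (1 / norm x)) \<le> w x"
    by (rule lower)
  moreover have "\<bar>a * (ln (1 / norm x) - ln (1 / norm y))\<bar> \<le> \<bar>a\<bar> * ln (1 / (1 - \<alpha>))"
    using abs_ln_norm_diff_in_ball[OF x \<alpha>] x_pos y
    by (simp add: ln_div abs_mult mult_left_mono)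
  then have "a * ln (1 / norm y) - \<bar>a\<bar> * ln (1 / (1 - \<alpha>)) \<le> a * ln (1 / norm x)"
    by (simp add: right_diff_distrib abs_le_iff)
  ultimately show "ereal (a * ln (1 / norm y) - \<bar>a\<bar> * ln (1 / (1 - \<alpha>))) \<le> w x"
    by (metis ereal_less_eq(3) order_trans)
qed

lemma Liminf_log_quotient_le_Liminf_inf_ball:
  fixes w :: "'a::{real_normed_vector,perfect_space} \<Rightarrow> ereal"
  assumes \<alpha>: "\<alpha> < 1"
  shows "Liminf (at 0) (\<lambda>x. w x / ereal (ln (1 / norm x)))
    \<le> Liminf (at 0) (\<lambda>y. (INF x\<in>ball y (\<alpha> * norm y). w x) / ereal (ln (1 / norm y)))"
proof (rule ereal_le_if_real_less_imp_le)
  define t :: "'a \<Rightarrow> real" where "t y = ln (1 / norm y)" for y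
  define C where "C = ln (1 / (1 - \<alpha>))"
  fix a assume "ereal a < Liminf (at 0) (\<lambda>x. w x / ereal (ln (1 / norm x)))"
  then have "\<forall>\<^sub>F x in at 0. ereal a < w x / ereal (t x)"
    unfolding t_def by (rule less_LiminfD)
  then obtain \<delta> where \<delta>: "0 < \<delta>" "\<And>x. 0 < norm x \<Longrightarrow> norm x < \<delta> \<Longrightarrow> ereal a < w x / ereal (t x)"
    unfolding eventually_at by (auto simp: dist_norm)
  have t_pos: "0 < t x" if "0 < norm x" "norm x < 1" for x
    using that by (simp add: t_def)
  have lower: "\<forall>\<^sub>F y in at 0. ereal (a - \<bar>a\<bar> * C / t y)
      \<le> (INF x\<in>ball y (\<alpha> * norm y). w x) / ereal (t y)"
  proof (rule eventually_at_0_norm_lessI)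
    show "0 < min (\<delta> / 2) (1 / 2)"
      using \<delta>(1) by simp
    fix y :: 'a assume "0 < norm y" "norm y < min (\<delta> / 2) (1 / 2)"
    then have y: "0 < norm y" "norm y < \<delta> / 2" "norm y < 1 / 2"
      by auto
    have "ereal (a * t x) \<le> w x" if "0 < norm x" "norm x < 2 * norm y" for x
    proof -
      have "ereal a < w x / ereal (t x)" "0 < t x"
        using that y \<delta>(2) t_pos by simp_all
      then show ?thesis
        by (simp add: ereal_less_divide_iff less_imp_le)
    qed
    then have "ereal (a * t y - \<bar>a\<bar> * C) \<le> (INF x\<in>ball y (\<alpha> * norm y). w x)"
      unfolding t_def C_def using inf_ball_ge_log_lower_bound[OF \<alpha> y(1)] by blast
    moreover have "t y * (a - \<bar>a\<bar> * C / t y) = a * t y - \<bar>a\<bar> * C"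
      using t_pos[OF y(1)] y(3) by (simp add: field_simps)
    ultimately show "ereal (a - \<bar>a\<bar> * C / t y)
        \<le> (INF x\<in>ball y (\<alpha> * norm y). w x) / ereal (t y)"
      using t_pos[OF y(1)] y(3) by (simp add: ereal_le_divide_pos)
  qed
  have "((\<lambda>y. ereal (a - \<bar>a\<bar> * C / t y)) \<longlongrightarrow> ereal a) (at 0)"
    unfolding t_def by (rule tendsto_ereal_minus_div_ln_inverse_norm)
  then have "ereal a = Liminf (at 0) (\<lambda>y. ereal (a - \<bar>a\<bar> * C / t y))"
    using lim_imp_Liminf[OF trivial_limit_at] by metis
  also have "\<dots> \<le> Liminf (at 0) (\<lambda>y. (INF x\<in>ball y (\<alpha> * norm y). w x) / ereal (t y))"
    using lower by (rule Liminf_mono)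
  finally show "ereal a \<le> Liminf (at 0)
      (\<lambda>y. (INF x\<in>ball y (\<alpha> * norm y). w x) / ereal (ln (1 / norm y)))"
    unfolding t_def .
qed

lemma inf_ball_log_barrier_estimate:
  fixes w :: "'a::euclidean_space \<Rightarrow> ereal"
  assumes n: "2 \<le> DIM('a)" and w: "n_superharmonic (ball 0 2) w"
    and w_nonneg: "\<forall>x\<in>ball 0 2. 0 \<le> w x"
    and \<alpha>: "0 < \<alpha>" "\<alpha> < 1" and y: "0 < norm y" "2 * norm y < norm x0" "norm x0 < 1 / 2"
    and L: "0 \<le> L" "ereal L \<le> (INF x\<in>ball y (\<alpha> * norm y). w x)"
  shows "ereal (L * ln (1 / (norm x0 + norm y)) / ln (2 / (\<alpha> * norm y))) \<le> w x0"
proof -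
  define \<rho> where "\<rho> = \<alpha> * norm y / 2"
  have "\<alpha> * norm y < 1 * norm y"
    using \<alpha> y by (intro mult_strict_right_mono) auto
  then have "0 < \<rho>" "\<rho> < norm y"
    using \<alpha> y by (simp_all add: \<rho>_def)
  then have \<rho>: "0 < \<rho>" "\<rho> < norm y" "\<rho> < 1"
    using y by linarith+
  have ln_\<rho>: "ln (1 / \<rho>) = ln (2 / (\<alpha> * norm y))"
    by (simp add: \<rho>_def)
  have dist: "\<rho> < dist y x0" "dist y x0 \<le> norm x0 + norm y" "dist y x0 < 1"
    using norm_triangle_ineq2[of x0 y] norm_triangle_ineq4[of x0 y] \<rho> y
    by (auto simp: dist_norm norm_minus_commute)
  have cball: "cball y 1 \<subseteq> ball 0 2"
  proof
    fix z assume "z \<in> cball y 1"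
    then have "norm (z - y) \<le> 1"
      by (simp add: dist_norm norm_minus_commute)
    then show "z \<in> ball 0 2"
      using norm_triangle_ineq2[of z y] y by simp
  qed
  have barrier: "ereal (L * ln (1 / dist y x0) / ln (1 / \<rho>)) \<le> w x0"
  proof (rule n_superharmonic_ge_log_barrier[OF n w \<rho>(1) \<rho>(3) cball])
    show "\<forall>z\<in>sphere y 1. 0 \<le> w z"
      using w_nonneg cball sphere_cball by blast
    have "\<rho> < \<alpha> * norm y"
      using \<alpha> y by (simp add: \<rho>_def)
    then have "sphere y \<rho> \<subseteq> ball y (\<alpha> * norm y)"
      by auto
    then show "\<forall>z\<in>sphere y \<rho>. ereal L \<le> w z"
      using L(2) by (fastforce intro: order_trans INF_lower)
  qed (use dist in auto)
  have "0 < dist y x0" "0 < norm x0 + norm y"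
    using dist \<rho> y by linarith+
  then have "ln (1 / (norm x0 + norm y)) \<le> ln (1 / dist y x0)"
    using dist(2) by (intro ln_mono frac_le) simp_all
  then have "L * ln (1 / (norm x0 + norm y)) / ln (1 / \<rho>) \<le> L * ln (1 / dist y x0) / ln (1 / \<rho>)"
    using L(1) \<rho> by (intro divide_right_mono mult_left_mono) simp_all
  with barrier show ?thesis
    using ln_\<rho> order_trans ereal_less_eq(3) by metis
qed

lemma tendsto_log_barrier_bound:
  fixes x0 :: "'a::real_normed_vector"
  assumes \<alpha>: "0 < \<alpha>" and x0: "0 < norm x0"
  shows "((\<lambda>y. s * (ln (1 / norm y) / ln (2 / (\<alpha> * norm y))) * ln (1 / (norm x0 + norm y)))
    \<longlongrightarrow> s * ln (1 / norm x0)) (at (0::'a))"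
proof -
  have "((\<lambda>r. ln (1 / r) / ln (2 / (\<alpha> * r))) \<longlongrightarrow> 1) (at_right 0)"
    using \<alpha> by real_asymp
  then have "((\<lambda>y. ln (1 / norm y) / ln (2 / (\<alpha> * norm y))) \<longlongrightarrow> 1) (at (0::'a))"
    by (rule filterlim_compose[OF _ filterlim_norm_at_right_0])
  moreover have "((\<lambda>y. ln (1 / (norm x0 + norm y))) \<longlongrightarrow> ln (1 / (norm x0 + 0))) (at (0::'a))"
    using x0 by (intro tendsto_intros tendsto_norm_zero tendsto_ident_at) auto
  ultimately have "((\<lambda>y. s * (ln (1 / norm y) / ln (2 / (\<alpha> * norm y))) * ln (1 / (norm x0 + norm y)))
      \<longlongrightarrow> s * 1 * ln (1 / (norm x0 + 0))) (at (0::'a))"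
    by (intro tendsto_mult tendsto_const)
  then show ?thesis
    by simp
qed

lemma Limsup_inf_ball_le_log_quotient:
  fixes w :: "'a::euclidean_space \<Rightarrow> ereal"
  assumes n: "2 \<le> DIM('a)" and w: "n_superharmonic (ball 0 2) w"
    and w_nonneg: "\<forall>x\<in>ball 0 2. 0 \<le> w x"
    and \<alpha>: "0 < \<alpha>" "\<alpha> < 1" and x0: "0 < norm x0" "norm x0 < 1 / 2"
  shows "Limsup (at 0) (\<lambda>y. (INF x\<in>ball y (\<alpha> * norm y). w x) / ereal (ln (1 / norm y)))
    \<le> w x0 / ereal (ln (1 / norm x0))"
proof (rule ereal_le_if_real_less_imp_le)
  define t :: "'a \<Rightarrow> real" where "t y = ln (1 / norm y)" for y
  define I where "I y = (INF x\<in>ball y (\<alpha> * norm y). w x)" for y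
  (* E s y is the barrier bound for w x0 obtained from a point y with s * t y \<le> I y *)
  define E where "E s y = s * (t y / ln (2 / (\<alpha> * norm y))) * ln (1 / (norm x0 + norm y))" for s y
  have t_pos: "0 < t x" if "0 < norm x" "norm x < 1" for x
    using that by (simp add: t_def)
  fix s assume "ereal s < Limsup (at 0) (\<lambda>y. I y / ereal (ln (1 / norm y)))"
  then have often: "\<exists>\<^sub>F y in at 0. ereal s < I y / ereal (t y)"
    unfolding t_def by (rule frequently_less_if_less_Limsup)
  have "ereal (s * t x0) \<le> w x0"
  proof (cases "s \<le> 0")
    case True
    then show ?thesis
      using w_nonneg x0 t_pos[of x0] by (auto intro: order_trans[of _ 0] simp: mult_nonpos_nonneg)
  next
    case False
    have "\<exists>\<^sub>F y in at 0. ereal (E s y) \<le> w x0"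
    proof (rule frequently_mp[OF _ often], rule eventually_at_0_norm_lessI)
      show "0 < norm x0 / 2"
        using x0 by simp
      fix y :: 'a assume y: "0 < norm y" "norm y < norm x0 / 2"
      then have ty: "0 < t y"
        using x0 t_pos by simp
      show "ereal s < I y / ereal (t y) \<longrightarrow> ereal (E s y) \<le> w x0"
      proof
        assume "ereal s < I y / ereal (t y)"
        then have "ereal (s * t y) \<le> I y"
          using ty by (simp add: ereal_less_divide_iff less_imp_le)
        moreover have "0 \<le> s * t y"
          using False ty by simp
        ultimately show "ereal (E s y) \<le> w x0"
          using inf_ball_log_barrier_estimate[OF n w w_nonneg \<alpha> y(1) _ x0(2), of "s * t y"] y
          by (simp add: E_def I_def)
      qed
    qed
    moreover have "((\<lambda>y. ereal (E s y)) \<longlongrightarrow> ereal (s * t x0)) (at 0)"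
      unfolding E_def t_def using tendsto_log_barrier_bound[OF \<alpha>(1) x0(1)] by simp
    ultimately show ?thesis
      using tendsto_le_if_frequently_le by blast
  qed
  then show "ereal s \<le> w x0 / ereal (ln (1 / norm x0))"
    using t_pos[of x0] x0 by (simp add: ereal_le_divide_pos t_def mult.commute)
qed

theorem lemma3p7:
  fixes w :: "'a::euclidean_space \<Rightarrow> ereal" and \<mu> :: "'a measure" and \<alpha> :: real
  assumes "DIM('a) \<ge> 2"
    and "\<forall>x\<in>ball 0 2. w x \<ge> 0"
    and "n_superharmonic (ball 0 2) w"
    and "radon_on (ball 0 2) \<mu>"
    and "neg_n_laplacian_eq (ball 0 2) w \<mu>"
    and "0 < \<alpha>" and "\<alpha> < 1"
  shows "((\<lambda>y. (INF x\<in>ball y (\<alpha> * norm y). w x) / ereal (ln (1 / norm y)))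
           \<longlongrightarrow> Liminf (at 0) (\<lambda>x. w x / ereal (ln (1 / norm x)))) (at 0)"
proof -
  define Q where "Q y = (INF x\<in>ball y (\<alpha> * norm y). w x) / ereal (ln (1 / norm y))" for y
  define f where "f x = w x / ereal (ln (1 / norm x))" for x
  have "Liminf (at 0) f \<le> Liminf (at 0) Q"
    unfolding Q_def f_def using Liminf_log_quotient_le_Liminf_inf_ball[OF assms(7)] .
  moreover have "Liminf (at 0) Q \<le> Limsup (at 0) Q"
    by (rule Liminf_le_Limsup[OF trivial_limit_at])
  moreover have "Limsup (at 0) Q \<le> Liminf (at 0) f"
  proof (rule Liminf_bounded, rule eventually_at_0_norm_lessI)
    show "Limsup (at 0) Q \<le> f x" if "0 < norm x" "norm x < 1 / 2" for x
      unfolding Q_def f_def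
      using Limsup_inf_ball_le_log_quotient[OF assms(1,3,2,6,7) that] .
  qed simp
  ultimately have "(Q \<longlongrightarrow> Liminf (at 0) f) (at 0)"
    by (intro Liminf_eq_Limsup[OF trivial_limit_at]) (auto intro: antisym)
  then show ?thesis
    unfolding Q_def f_def .
qed

end
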